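(* Let $f:[0,\infty)\to\mathbb{R}$ be differentiable, let $0<a<b<\infty$, and suppose $f'$ is Lebesgue integrable on $[a,b]$. Let $(\alpha,m)\in(0,1]^2$ and suppose $|f'|$ is $(\alpha,m)$-GA-convex on $[0,\max\{a^{1/m},b\}]$. Then \[ \biggl|\frac{b^2f(b)-a^2f(a)}{2}-\int_a^b xf(x)\,dx\biggr|\le\frac{\ln b-\ln a}{2}\Bigl\{m\bigl[L(a^3,b^3)-G(\alpha,3)\bigr]\bigl|f'(a^{1/m})\bigr|+G(\alpha,3)|f'(b)|\Bigr\}. \]
   Context: For $c>0$, $h:[0,c]\to\mathbb{R}$ and $(\alpha,m)\in(0,1]^2$, $h$ is called $(\alpha,m)$-GA-convex on $[0,c]$ if $h\bigl(x^\lambda y^{m(1-\lambda)}\bigr)\le\lambda^\alpha h(x)+m(1-\lambda^\alpha)h(y)$ for all $x,y\in[0,c]$ and all $\lambda\in[0,1]$ (with the convention $0^0=1$). For fixed $0<a<b$ and $\ell\ge0$, $\alpha>0$, set $G(\alpha,\ell)=\int_0^1 t^\alpha a^{\ell(1-t)}b^{\ell t}\,dt$. For $x,y>0$, $x\neq y$, the logarithmic mean is $L(x,y)=\frac{y-x}{\ln y-\ln x}$. *)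

theory Defs
  imports "HOL-Analysis.Analysis"
begin

text \<open>Real power with the convention 0^0 = 1 (Isabelle's powr has 0 powr 0 = 0).\<close>
definition gpow :: "real \<Rightarrow> real \<Rightarrow> real" where
  "gpow x t = (if t = 0 then 1 else x powr t)"

definition ga_convex :: "real \<Rightarrow> real \<Rightarrow> real \<Rightarrow> (real \<Rightarrow> real) \<Rightarrow> bool" where
  "ga_convex \<alpha> m c h \<longleftrightarrow>
     (\<forall>x\<in>{0..c}. \<forall>y\<in>{0..c}. \<forall>s\<in>{0..1}.
        h (gpow x s * gpow y (m * (1 - s)))
          \<le> gpow s \<alpha> * h x + m * (1 - gpow s \<alpha>) * h y)"

definition Gfun :: "real \<Rightarrow> real \<Rightarrow> real \<Rightarrow> real \<Rightarrow> real" where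
  "Gfun a b \<alpha> l = integral {0..1} (\<lambda>t. gpow t \<alpha> * a powr (l * (1 - t)) * b powr (l * t))"

definition logmean :: "real \<Rightarrow> real \<Rightarrow> real" where
  "logmean x y = (y - x) / (ln y - ln x)"

end

theory Submission
  imports Defs
begin

text \<open>Substituting x(t) = a^(1-t) b^t and integrating by parts turns the left-hand side into
  (ln b - ln a)/2 times the integral over [0,1] of x(t)^3 f'(x(t)). Since
  x(t) = b^t (a^(1/m))^(m(1-t)), GA-convexity bounds |f'(x(t))| by
  t^\<alpha> |f'(b)| + m (1 - t^\<alpha>) |f'(a^(1/m))|, and the resulting integrals are G(\<alpha>,3) and
  the integral of x(t)^3 = a^(3(1-t)) b^(3t), which is L(a^3,b^3).\<close>

lemma gpow_eq_powr: "x > 0 \<or> t \<noteq> 0 \<Longrightarrow> gpow x t = x powr t"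
  by (auto simp: gpow_def)

definition geo_path :: "real \<Rightarrow> real \<Rightarrow> real \<Rightarrow> real" where
  "geo_path a b t = a powr (1 - t) * b powr t"

lemma geo_path_eq_exp: "0 < a \<Longrightarrow> 0 < b \<Longrightarrow> geo_path a b t = a * exp (t * (ln b - ln a))"
  by (simp add: geo_path_def powr_def exp_add[symmetric] exp_diff algebra_simps)

lemma geo_path_0: "0 < a \<Longrightarrow> 0 < b \<Longrightarrow> geo_path a b 0 = a"
  and geo_path_1: "0 < a \<Longrightarrow> 0 < b \<Longrightarrow> geo_path a b 1 = b"
  by (simp_all add: geo_path_eq_exp exp_diff)

lemma geo_path_pos: "0 < a \<Longrightarrow> 0 < b \<Longrightarrow> geo_path a b t > 0"
  by (simp add: geo_path_eq_exp)

lemma geo_path_power: "0 < a \<Longrightarrow> 0 < b \<Longrightarrow> geo_path a b t ^ n = geo_path (a ^ n) (b ^ n) t"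
  by (simp add: geo_path_def powr_realpow[symmetric] powr_powr power_mult_distrib
      powr_mult mult.commute)

lemma geo_path_in_interval:
  assumes "0 < a" "a \<le> b" "t \<in> {0..1}"
  shows "geo_path a b t \<in> {a..b}"
proof -
  have "0 \<le> t * (ln b - ln a)" "t * (ln b - ln a) \<le> ln b - ln a"
    using assms by (auto simp: mult_left_le_one_le)
  then have "a \<le> a * exp (t * (ln b - ln a))" "a * exp (t * (ln b - ln a)) \<le> a * exp (ln b - ln a)"
    using assms(1) by auto
  moreover have "a * exp (ln b - ln a) = b"
    using assms by (simp add: exp_diff)
  ultimately show ?thesis
    using assms by (simp add: geo_path_eq_exp)
qed

lemma has_real_derivative_geo_path:
  assumes "0 < a" "0 < b"
  shows "(geo_path a b has_real_derivative geo_path a b t * (ln b - ln a)) (at t)"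
proof -
  have "geo_path a b = (\<lambda>t. a * exp (t * (ln b - ln a)))"
    using assms by (simp add: geo_path_eq_exp fun_eq_iff)
  then show ?thesis
    using assms by (auto intro!: derivative_eq_intros simp: geo_path_eq_exp)
qed

lemma geo_path_has_integral_logmean:
  assumes "0 < a" "0 < b" "a \<noteq> b"
  shows "(geo_path a b has_integral logmean a b) {0..1}"
proof -
  have k: "ln b - ln a \<noteq> 0"
    using assms by simp
  have "(geo_path a b has_integral
      geo_path a b 1 / (ln b - ln a) - geo_path a b 0 / (ln b - ln a)) {0..1}"
  proof (rule fundamental_theorem_of_calculus)
    fix t
    have "((\<lambda>t. geo_path a b t / (ln b - ln a)) has_real_derivative geo_path a b t) (at t)"
      using has_real_derivative_geo_path[OF assms(1,2), of t] k
      by (auto intro!: derivative_eq_intros)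
    then show "((\<lambda>t. geo_path a b t / (ln b - ln a)) has_vector_derivative geo_path a b t)
        (at t within {0..1})"
      by (simp add: has_real_derivative_iff_has_vector_derivative[symmetric]
          has_field_derivative_at_within)
  qed simp
  then show ?thesis
    using assms by (simp add: geo_path_0 geo_path_1 logmean_def diff_divide_distrib)
qed

lemma has_integral_by_parts_geo_path:
  assumes ab: "0 < a" "a \<le> b"
    and deriv: "\<And>x. x \<in> {a..b} \<Longrightarrow> (f has_real_derivative f' x) (at x within {a..b})"
  shows "((\<lambda>t. (ln b - ln a) / 2 * geo_path a b t ^ 3 * f' (geo_path a b t))
    has_integral (b\<^sup>2 * f b - a\<^sup>2 * f a) / 2 - integral {a..b} (\<lambda>x. x * f x)) {0..1}"
proof -
  let ?x = "geo_path a b" and ?k = "ln b - ln a"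
  have b: "0 < b" using ab by linarith
  have x_mem: "?x t \<in> {a..b}" if "t \<in> {0..1}" for t
    using geo_path_in_interval[OF ab that] .
  have dx: "(?x has_real_derivative ?x t * ?k) (at t within {0..1})" for t
    using has_real_derivative_geo_path[OF ab(1) b] by (rule has_field_derivative_at_within)
  have cont_xf: "continuous_on {a..b} (\<lambda>x. x * f x)"
    using DERIV_continuous_on[OF deriv] by (intro continuous_intros)
  have product_rule: "((\<lambda>t. (?x t * ?k) * (?x t * f (?x t)) + ?k / 2 * ?x t ^ 3 * f' (?x t))
      has_integral b\<^sup>2 / 2 * f b - a\<^sup>2 / 2 * f a) {0..1}"
  proof -
    have "((\<lambda>t. ?x t ^ 2 / 2 * f (?x t)) has_real_derivative
        (?x t * ?k) * (?x t * f (?x t)) + ?k / 2 * ?x t ^ 3 * f' (?x t)) (at t within {0..1})"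
      if t: "t \<in> {0..1}" for t
    proof -
      have "(f has_real_derivative f' (?x t)) (at (?x t) within ?x ` {0..1})"
        using deriv[OF x_mem[OF t]] by (rule has_field_derivative_subset) (use x_mem in auto)
      then have df: "((\<lambda>t. f (?x t)) has_real_derivative f' (?x t) * (?x t * ?k))
          (at t within {0..1})"
        using DERIV_image_chain[OF _ dx] by (simp add: o_def)
      show ?thesis
        by (rule derivative_eq_intros df dx refl | simp)+
          (simp add: power2_eq_square power3_eq_cube algebra_simps)
    qed
    then have "((\<lambda>t. (?x t * ?k) * (?x t * f (?x t)) + ?k / 2 * ?x t ^ 3 * f' (?x t))
        has_integral ?x 1 ^ 2 / 2 * f (?x 1) - ?x 0 ^ 2 / 2 * f (?x 0)) {0..1}"
      by (intro fundamental_theorem_of_calculus)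
        (auto simp: has_real_derivative_iff_has_vector_derivative[symmetric])
    then show ?thesis
      using ab b by (simp add: geo_path_0 geo_path_1)
  qed
  have subst: "((\<lambda>t. (?x t * ?k) * (?x t * f (?x t))) has_integral integral {a..b} (\<lambda>x. x * f x))
      {0..1}"
  proof -
    have "?x ` {0..1} \<subseteq> {a..b}"
      using x_mem by blast
    then show ?thesis
      using has_integral_substitution[OF _ _ _ cont_xf, of 0 1 ?x "\<lambda>t. ?x t * ?k"] dx ab b
      by (simp add: geo_path_0 geo_path_1)
  qed
  show ?thesis
    using has_integral_diff[OF product_rule subst] by (simp add: diff_divide_distrib algebra_simps)
qed

lemma ga_convex_geo_path_le:
  assumes conv: "ga_convex \<alpha> m c h" and "0 < a" "0 < b" "0 < m"
    and "a powr (1/m) \<le> c" "b \<le> c" "t \<in> {0..1}"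
  shows "h (geo_path a b t) \<le> gpow t \<alpha> * h b + m * (1 - gpow t \<alpha>) * h (a powr (1/m))"
proof -
  have "gpow b t * gpow (a powr (1/m)) (m * (1 - t)) = geo_path a b t"
    using assms by (simp add: gpow_eq_powr powr_powr geo_path_def mult.commute)
  moreover have "b \<in> {0..c}" "a powr (1/m) \<in> {0..c}"
    using assms by auto
  ultimately show ?thesis
    using conv \<open>t \<in> {0..1}\<close> unfolding ga_convex_def by metis
qed

lemma Gfun_has_integral:
  assumes "0 < a" "0 < b" "0 < \<alpha>"
  shows "((\<lambda>t. t powr \<alpha> * geo_path a b t ^ n) has_integral Gfun a b \<alpha> n) {0..1}"
proof -
  have integrand: "gpow t \<alpha> * a powr (n * (1 - t)) * b powr (n * t) = t powr \<alpha> * geo_path a b t ^ n"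
    for t :: real
    using assms by (simp add: gpow_eq_powr geo_path_def powr_realpow[symmetric]
        powr_mult powr_powr mult.commute)
  have "continuous_on {0..1} (\<lambda>t. t powr \<alpha> * geo_path a b t ^ n)"
    using assms DERIV_continuous_on[OF has_field_derivative_at_within[OF
        has_real_derivative_geo_path[OF assms(1,2)]]]
    by (intro continuous_intros continuous_on_powr') auto
  then show ?thesis
    unfolding Gfun_def integrand using has_integral_integral integrable_continuous_interval by blast
qed

lemma has_integral_ga_majorant:
  assumes "0 < a" "a < b" "0 < \<alpha>"
  shows "((\<lambda>t. geo_path a b t ^ 3 * (t powr \<alpha> * B + m * (1 - t powr \<alpha>) * A))
    has_integral B * Gfun a b \<alpha> 3 + m * A * (logmean (a ^ 3) (b ^ 3) - Gfun a b \<alpha> 3)) {0..1}"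
proof -
  have "0 < b" "a ^ 3 \<noteq> b ^ 3"
    using assms by (auto dest: power_strict_mono[of a b 3])
  then have "((\<lambda>t. B * (t powr \<alpha> * geo_path a b t ^ 3)
      + m * A * (geo_path a b t ^ 3 - t powr \<alpha> * geo_path a b t ^ 3))
      has_integral B * Gfun a b \<alpha> 3 + m * A * (logmean (a ^ 3) (b ^ 3) - Gfun a b \<alpha> 3)) {0..1}"
    using geo_path_has_integral_logmean[of "a ^ 3" "b ^ 3"] Gfun_has_integral[of a b \<alpha> 3] assms
    by (intro has_integral_mult_right has_integral_add has_integral_diff) (auto simp: geo_path_power)
  then show ?thesis
    by (rule has_integral_eq[rotated]) (simp add: algebra_simps)
qed

theorem corollary3p1:
  fixes f f' :: "real \<Rightarrow> real" and a b \<alpha> m :: real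
  assumes deriv: "\<And>x. x \<ge> 0 \<Longrightarrow> (f has_real_derivative f' x) (at x within {0..})"
    and ab: "0 < a" "a < b"
    and int: "f' absolutely_integrable_on {a..b}"
    and alpha: "0 < \<alpha>" "\<alpha> \<le> 1"
    and m: "0 < m" "m \<le> 1"
    and conv: "ga_convex \<alpha> m (max (a powr (1/m)) b) (\<lambda>x. \<bar>f' x\<bar>)"
  shows "\<bar>(b\<^sup>2 * f b - a\<^sup>2 * f a) / 2 - integral {a..b} (\<lambda>x. x * f x)\<bar>
    \<le> (ln b - ln a) / 2 *
       (m * (logmean (a ^ 3) (b ^ 3) - Gfun a b \<alpha> 3) * \<bar>f' (a powr (1/m))\<bar>
        + Gfun a b \<alpha> 3 * \<bar>f' b\<bar>)"
proof -
  let ?x = "geo_path a b" and ?k = "ln b - ln a"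
  define A B where "A = \<bar>f' (a powr (1/m))\<bar>" and "B = \<bar>f' b\<bar>"
  let ?g = "\<lambda>t. ?k / 2 * ?x t ^ 3 * f' (?x t)"
  let ?h = "\<lambda>t. ?k / 2 * (?x t ^ 3 * (t powr \<alpha> * B + m * (1 - t powr \<alpha>) * A))"
  have b: "0 < b" and k: "0 < ?k" using ab by auto
  have lhs: "(?g has_integral (b\<^sup>2 * f b - a\<^sup>2 * f a) / 2 - integral {a..b} (\<lambda>x. x * f x)) {0..1}"
    using ab by (intro has_integral_by_parts_geo_path has_field_derivative_subset[OF deriv]) auto
  have rhs: "(?h has_integral
      ?k / 2 * (B * Gfun a b \<alpha> 3 + m * A * (logmean (a ^ 3) (b ^ 3) - Gfun a b \<alpha> 3))) {0..1}"
    using has_integral_ga_majorant[OF ab alpha(1)] by (rule has_integral_mult_right)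
  have "norm (?g t) \<le> ?h t" if "t \<in> {0..1}" for t
  proof -
    have "\<bar>f' (?x t)\<bar> \<le> t powr \<alpha> * B + m * (1 - t powr \<alpha>) * A"
      using ga_convex_geo_path_le[OF conv ab(1) b m(1) _ _ that] alpha
      by (simp add: A_def B_def gpow_eq_powr)
    then show ?thesis
      using k geo_path_pos[OF ab(1) b, of t] by (simp add: abs_mult mult_left_mono)
  qed
  then have "norm (integral {0..1} ?g) \<le> integral {0..1} ?h"
    using lhs rhs by (intro integral_norm_bound_integral) auto
  then show ?thesis
    unfolding integral_unique[OF lhs] integral_unique[OF rhs]
    by (simp add: A_def B_def algebra_simps)
qed

end
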